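(* A non-degenerate hydrodynamic Poisson bracket coming from a kinetic model has signature $(l,q)$ with $l\ge 1$ and $q\ge1$.
   Context: Fields $u_1(x),\dots,u_N(x)$ on $\mathbb R$ vanish at infinity with all derivatives; $F_n=\delta F/\delta u_n$; repeated indices are summed. A hydrodynamic bracket is $\{F,G\}=\int(\partial_xF_n\,\alpha_{nm}(\mathbf u)G_m+F_n\beta_{nm}(\mathbf u,\partial_x\mathbf u)G_m)\,\mathrm dx$ with $\alpha$ symmetric depending only on $\mathbf u$, $\beta$ linear in $\partial_x\mathbf u$, and $\partial_x\alpha=\beta+\beta^t$. It is non-degenerate if $\alpha$ is invertible, and Poisson if it satisfies the Jacobi identity. It is known (Dubrovin–Novikov) that a non-degenerate hydrodynamic bracket is Poisson iff there is a locally invertible change of variables $\mathbf u\mapsto\boldsymbol\nu(\mathbf u)$ in which it reads $\int\partial_x\overline F_n\,g_{nm}\overline G_m\,\mathrm dx$ with $g$ a constant symmetric non-degenerate matrix; the signature of the bracket is the signature $(l,q)$ of $g$ ($l$ positive, $q$ negative eigenvalues), which is independent of the choice of such coordinates. The bracket comes from a kinetic model if there is a local change of variables $\mathbf u\mapsto\mathbf P(\mathbf u)=(P_0,\dots,P_{N-1})$ mapping it to a truncated Kupershmidt–Manin bracket, i.e. the hydrodynamic bracket in the fields $P_0,\dots,P_{N-1}$ (indices summed from $0$ to $N-1$) with $\alpha_{nm}=(n+m)P_{n+m-1}$ and $\beta_{nm}=n\,\partial_xP_{n+m-1}$, where for $n\ge N$ the quantities $P_n=P_n(P_0,\dots,P_{N-1})$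 are given smooth functions (a closure). *)

theory Defs
  imports "HOL-Analysis.Analysis"
begin

text \<open>Points of field space R^N are vectors of type real^'n, the N = CARD'n
 components being numbered 0..N-1 via the enumeration of the finite type 'n.
 Matrices are real^'n^'n.\<close>

definition idx :: "nat \<Rightarrow> ('n::enum)" where
  "idx k = (Enum.enum :: ('n::enum) list) ! k"

definition num :: "('n::enum) \<Rightarrow> nat" where
  "num i = (THE k. k < length (Enum.enum :: ('n::enum) list) \<and> (Enum.enum :: ('n::enum) list) ! k = i)"

text \<open>Hydrodynamic bracket on an open domain U of field values:
 alpha = a u symmetric, beta = b u w linear in w = d/dx u, and
 d/dx alpha(u(x)) = beta + beta^t, i.e. D a (u) w = b u w + (b u w)^t.\<close>

definition hydro_bracket ::
  "(real^('n::enum)) set \<Rightarrow> (real^('n::enum) \<Rightarrow> real^('n::enum)^('n::enum)) \<Rightarrow> (real^('n::enum) \<Rightarrow> real^('n::enum) \<Rightarrow> real^('n::enum)^('n::enum)) \<Rightarrow> bool" where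
  "hydro_bracket U a b \<longleftrightarrow> open U \<and>
     (\<forall>u\<in>U. transpose (a u) = a u \<and> linear (b u) \<and>
        (a has_derivative (\<lambda>w. b u w + transpose (b u w))) (at u))"

definition nondegenerate :: "(real^('n::enum)) set \<Rightarrow> (real^('n::enum) \<Rightarrow> real^('n::enum)^('n::enum)) \<Rightarrow> bool" where
  "nondegenerate U a \<longleftrightarrow> (\<forall>u\<in>U. invertible (a u))"

definition change_of_vars ::
  "(real^('n::enum)) set \<Rightarrow> (real^('n::enum) \<Rightarrow> real^('n::enum)) \<Rightarrow> (real^('n::enum) \<Rightarrow> real^('n::enum)^('n::enum)) \<Rightarrow> bool" where
  "change_of_vars V phi J \<longleftrightarrow>
     (\<forall>u\<in>V. (phi has_derivative (\<lambda>w. J u *v w)) (at u) \<and> invertible (J u) \<and> J differentiable (at u))"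

text \<open>Coefficients of the transformed bracket, expressed at the point u (old variables)
 and with w = d/dx u: alpha' = J alpha J^t, beta' = (d/dx J) alpha J^t + J beta J^t.\<close>

definition tr_alpha ::
  "(real^('n::enum) \<Rightarrow> real^('n::enum)^('n::enum)) \<Rightarrow> (real^('n::enum) \<Rightarrow> real^('n::enum)^('n::enum)) \<Rightarrow> real^('n::enum) \<Rightarrow> real^('n::enum)^('n::enum)" where
  "tr_alpha a J u = J u ** a u ** transpose (J u)"

definition tr_beta ::
  "(real^('n::enum) \<Rightarrow> real^('n::enum)^('n::enum)) \<Rightarrow> (real^('n::enum) \<Rightarrow> real^('n::enum) \<Rightarrow> real^('n::enum)^('n::enum)) \<Rightarrow> (real^('n::enum) \<Rightarrow> real^('n::enum)^('n::enum))
     \<Rightarrow> real^('n::enum) \<Rightarrow> real^('n::enum) \<Rightarrow> real^('n::enum)^('n::enum)" where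
  "tr_beta a b J u w = frechet_derivative J (at u) w ** a u ** transpose (J u)
                        + J u ** b u w ** transpose (J u)"

text \<open>Flat (Dubrovin--Novikov) coordinates: the bracket becomes int dF g G dx, g constant.\<close>

definition flat_coordinates ::
  "(real^('n::enum)) set \<Rightarrow> (real^('n::enum) \<Rightarrow> real^('n::enum)^('n::enum)) \<Rightarrow> (real^('n::enum) \<Rightarrow> real^('n::enum) \<Rightarrow> real^('n::enum)^('n::enum))
     \<Rightarrow> (real^('n::enum) \<Rightarrow> real^('n::enum)) \<Rightarrow> (real^('n::enum) \<Rightarrow> real^('n::enum)^('n::enum)) \<Rightarrow> real^('n::enum)^('n::enum) \<Rightarrow> bool" where
  "flat_coordinates U a b nu J g \<longleftrightarrow> change_of_vars U nu J \<and> transpose g = g \<and> invertible g \<and>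
     (\<forall>u\<in>U. tr_alpha a J u = g \<and> (\<forall>w. tr_beta a b J u w = 0))"

text \<open>Poisson property of a non-degenerate hydrodynamic bracket, via Dubrovin--Novikov.\<close>

definition poisson_DN ::
  "(real^('n::enum)) set \<Rightarrow> (real^('n::enum) \<Rightarrow> real^('n::enum)^('n::enum)) \<Rightarrow> (real^('n::enum) \<Rightarrow> real^('n::enum) \<Rightarrow> real^('n::enum)^('n::enum)) \<Rightarrow> bool" where
  "poisson_DN U a b \<longleftrightarrow> (\<exists>nu J g. flat_coordinates U a b nu J g)"

text \<open>Number of positive / negative eigenvalues (with multiplicity) of a symmetric matrix:
 dimension of the span of the eigenvectors for positive / negative eigenvalues.\<close>

definition pos_index :: "real^('n::enum)^('n::enum) \<Rightarrow> nat" where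
  "pos_index g = dim (span {v. \<exists>c>0. g *v v = c *\<^sub>R v})"

definition neg_index :: "real^('n::enum)^('n::enum) \<Rightarrow> nat" where
  "neg_index g = dim (span {v. \<exists>c<0. g *v v = c *\<^sub>R v})"

definition bracket_signature ::
  "(real^('n::enum)) set \<Rightarrow> (real^('n::enum) \<Rightarrow> real^('n::enum)^('n::enum)) \<Rightarrow> (real^('n::enum) \<Rightarrow> real^('n::enum) \<Rightarrow> real^('n::enum)^('n::enum)) \<Rightarrow> nat \<Rightarrow> nat \<Rightarrow> bool" where
  "bracket_signature U a b l q \<longleftrightarrow>
     (\<exists>nu J g. flat_coordinates U a b nu J g \<and> pos_index g = l \<and> neg_index g = q)"

text \<open>Kupershmidt--Manin moments with closure: P_k = k-th component of P for k < N,
 P_k = clos k (P_0,...,P_(N-1)) for k >= N.\<close>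

definition KMP :: "(nat \<Rightarrow> real^('n::enum) \<Rightarrow> real) \<Rightarrow> (real^('n::enum) \<Rightarrow> real^('n::enum)) \<Rightarrow> nat \<Rightarrow> real^('n::enum) \<Rightarrow> real" where
  "KMP clos P k u = (if k < CARD('n::enum) then P u $ idx k else clos k (P u))"

definition from_kinetic_model ::
  "(real^('n::enum)) set \<Rightarrow> (real^('n::enum) \<Rightarrow> real^('n::enum)^('n::enum)) \<Rightarrow> (real^('n::enum) \<Rightarrow> real^('n::enum) \<Rightarrow> real^('n::enum)^('n::enum)) \<Rightarrow> bool" where
  "from_kinetic_model U a b \<longleftrightarrow>
     (\<exists>V P JP clos. V \<subseteq> U \<and> open V \<and> V \<noteq> {} \<and> change_of_vars V P JP \<and>
        (\<forall>k\<ge>CARD('n::enum). \<forall>p. clos k differentiable (at p)) \<and>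
        (\<forall>u\<in>V. \<forall>i j.
            tr_alpha a JP u $ i $ j = of_nat (num i + num j) * KMP clos P (num i + num j - 1) u \<and>
            (\<forall>w. tr_beta a b JP u w $ i $ j =
                   of_nat (num i) * frechet_derivative (KMP clos P (num i + num j - 1)) (at u) w)))"

end

theory Submission
  imports Defs
begin

text \<open>In the moment coordinates P the Kupershmidt--Manin coefficient alpha_00 = 0 * P_{-1}
 vanishes, so the quadratic form of alpha(u) has a nonzero isotropic vector. Changes of
 variables act on alpha by congruence, so the constant metric g of flat coordinates is a
 non-degenerate symmetric form with a nonzero isotropic vector. Such a form is indefinite,
 because a semidefinite form vanishes only on its kernel, and an indefinite symmetric form
 has eigenvalues of both signs.\<close>

lemma inner_matrix_transpose: "inner x (A *v y) = inner (transpose A *v x) (y::real^'n)"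
  by (simp add: dot_lmul_matrix)

lemma symmetric_matrix_inner_commute:
  fixes A :: "real^'n^'n"
  assumes "transpose A = A"
  shows "inner x (A *v y) = inner y (A *v x)"
  by (metis assms inner_matrix_transpose inner_commute)

lemma quadratic_form_add_scaleR:
  fixes A :: "real^'n^'n"
  assumes "transpose A = A"
  shows "inner (x + t *\<^sub>R y) (A *v (x + t *\<^sub>R y))
           = inner x (A *v x) + 2 * t * inner y (A *v x) + t\<^sup>2 * inner y (A *v y)"
  using symmetric_matrix_inner_commute[OF assms, of x y]
  by (simp add: inner_add_left inner_add_right matrix_vector_right_distrib
      matrix_vector_mult_scaleR power2_eq_square algebra_simps)

lemma matrix_vector_mult_uminus: "(- A) *v x = - (A *v x)"
  for A :: "'a::ring_1^'n^'m"
  by (simp add: vec_eq_iff matrix_vector_mult_def sum_negf)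

lemma transpose_uminus: "transpose (- A) = - transpose A"
  for A :: "'a::ring_1^'n^'m"
  by (simp add: transpose_def vec_eq_iff)

lemma quadratic_form_congruence:
  "inner x ((M ** A ** transpose M) *v x) = inner (transpose M *v x) (A *v (transpose M *v x))"
  for M :: "real^'n^'m" and A :: "real^'n^'n"
  by (simp add: inner_matrix_transpose matrix_vector_mul_assoc[symmetric])

lemma invertible_matrix_vector_eq_0:
  fixes A :: "'a::field^'n^'n"
  assumes "invertible A"
  shows "A *v x = 0 \<longleftrightarrow> x = 0"
  using assms matrix_left_invertible_ker unfolding invertible_def by auto

lemma isotropic_congruence_iff:
  fixes M A :: "real^'n^'n"
  assumes "invertible M"
  shows "(\<exists>x. x \<noteq> 0 \<and> inner x ((M ** A ** transpose M) *v x) = 0)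
           \<longleftrightarrow> (\<exists>y. y \<noteq> 0 \<and> inner y (A *v y) = 0)"
proof -
  have Mt: "invertible (transpose M)"
    using assms by (rule transpose_invertible)
  then obtain B where B: "transpose M ** B = mat 1"
    unfolding invertible_def by blast
  show ?thesis
  proof
    assume "\<exists>x. x \<noteq> 0 \<and> inner x ((M ** A ** transpose M) *v x) = 0"
    then obtain x where "x \<noteq> 0" "inner x ((M ** A ** transpose M) *v x) = 0"
      by blast
    then show "\<exists>y. y \<noteq> 0 \<and> inner y (A *v y) = 0"
      using invertible_matrix_vector_eq_0[OF Mt, of x] quadratic_form_congruence[of x M A] by metis
  next
    assume "\<exists>y. y \<noteq> 0 \<and> inner y (A *v y) = 0"
    then obtain y where "y \<noteq> 0" "inner y (A *v y) = 0"
      by blast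
    moreover have "transpose M *v (B *v y) = y"
      by (simp only: matrix_vector_mul_assoc B matrix_vector_mul_lid)
    ultimately show "\<exists>x. x \<noteq> 0 \<and> inner x ((M ** A ** transpose M) *v x) = 0"
      using quadratic_form_congruence[of "B *v y" M A] by (metis matrix_vector_mult_0_right)
  qed
qed

lemma exists_pos_quadratic_below_linear:
  fixes c d :: real
  assumes "c > 0"
  obtains t where "t > 0" "t\<^sup>2 * d < t * c"
proof
  define t where "t = c / (\<bar>d\<bar> + 1)"
  show t: "t > 0"
    using assms by (simp add: t_def)
  have "t * \<bar>d\<bar> < c"
    using assms by (simp add: t_def field_simps)
  then have "t * d < c"
    by (smt (verit) t mult_left_mono abs_ge_self)
  then show "t\<^sup>2 * d < t * c"
    using t by (simp add: power2_eq_square)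
qed

lemma psd_quadratic_form_zero_imp_kernel:
  fixes A :: "real^'n^'n"
  assumes sym: "transpose A = A" and psd: "\<And>y. inner y (A *v y) \<ge> 0"
    and zero: "inner x (A *v x) = 0"
  shows "A *v x = 0"
proof (rule ccontr)
  define z where "z = A *v x"
  assume "A *v x \<noteq> 0"
  then have "inner z z > 0"
    by (simp add: z_def)
  then obtain t where t: "t > 0" "t\<^sup>2 * inner z (A *v z) < t * inner z z"
    by (rule exists_pos_quadratic_below_linear)
  have "inner (x - t *\<^sub>R z) (A *v (x - t *\<^sub>R z))
          = - 2 * t * inner z z + t\<^sup>2 * inner z (A *v z)"
    using quadratic_form_add_scaleR[OF sym, of x "- t" z] zero by (simp add: z_def)
  also have "\<dots> < 0"
    using t \<open>inner z z > 0\<close> mult_pos_pos[of t "inner z z"] by linarith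
  finally show False
    using psd by (metis not_le)
qed

text \<open>The maximum m of the form on the unit sphere is attained at some x0; then
 m I - A is positive semidefinite and vanishes at x0, so x0 is an eigenvector.\<close>

lemma symmetric_matrix_pos_eigenvector:
  fixes A :: "real^'n^'n"
  assumes sym: "transpose A = A" and pos: "inner x (A *v x) > 0"
  obtains v c where "v \<noteq> 0" "c > 0" "A *v v = c *\<^sub>R v"
proof -
  define Q where "Q z = inner z (A *v z)" for z
  have Q_scaleR: "Q (r *\<^sub>R z) = r\<^sup>2 * Q z" for r z
    by (simp add: Q_def matrix_vector_mult_scaleR power2_eq_square)
  have "x \<noteq> 0"
    using pos by auto
  then have x_sphere: "x /\<^sub>R norm x \<in> sphere 0 1"
    by simp
  have "continuous_on (sphere 0 1) Q"
    unfolding Q_def by (intro continuous_intros linear_continuous_on) auto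
  then obtain x0 where x0: "x0 \<in> sphere 0 1" and max: "\<And>y. y \<in> sphere 0 1 \<Longrightarrow> Q y \<le> Q x0"
    using continuous_attains_sup[OF compact_sphere] x_sphere by blast
  define m where "m = Q x0"
  have "0 < Q (x /\<^sub>R norm x)"
    using pos Q_scaleR[of "inverse (norm x)" x] \<open>x \<noteq> 0\<close> by (simp add: Q_def)
  also have "\<dots> \<le> m"
    using max x_sphere by (simp add: m_def)
  finally have "m > 0" .
  define B where "B = m *\<^sub>R mat 1 - A"
  have B_apply: "B *v z = m *\<^sub>R z - A *v z" for z
    by (simp add: B_def matrix_vector_mult_diff_rdistrib scaleR_matrix_vector_assoc[symmetric])
  have B_sym: "transpose B = B"
    using sym by (simp add: B_def transpose_def vec_eq_iff mat_def)
  have B_psd: "inner z (B *v z) \<ge> 0" for z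
  proof (cases "z = 0")
    case False
    have "Q (z /\<^sub>R norm z) \<le> m"
      using max False by (simp add: m_def)
    moreover have "(norm z)\<^sup>2 * Q (z /\<^sub>R norm z) = Q z"
      using Q_scaleR[of "inverse (norm z)" z] False by (simp add: field_simps)
    ultimately have "Q z \<le> (norm z)\<^sup>2 * m"
      by (metis mult_left_mono zero_le_power2)
    then show ?thesis
      by (simp add: B_apply Q_def inner_diff_right power2_norm_eq_inner mult.commute)
  qed simp
  have "inner x0 (B *v x0) = 0"
    using x0 by (simp add: B_apply inner_diff_right m_def Q_def dot_square_norm)
  then have "B *v x0 = 0"
    by (rule psd_quadratic_form_zero_imp_kernel[OF B_sym B_psd])
  then have "A *v x0 = m *\<^sub>R x0"
    by (simp add: B_apply)
  moreover have "x0 \<noteq> 0"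
    using x0 by auto
  ultimately show ?thesis
    using that \<open>m > 0\<close> by blast
qed

lemma symmetric_matrix_neg_eigenvector:
  fixes A :: "real^'n^'n"
  assumes sym: "transpose A = A" and neg: "inner x (A *v x) < 0"
  obtains v c where "v \<noteq> 0" "c < 0" "A *v v = c *\<^sub>R v"
proof -
  have "transpose (- A) = - A" and "inner x ((- A) *v x) > 0"
    using sym neg by (simp_all add: transpose_uminus matrix_vector_mult_uminus)
  then obtain v c where "v \<noteq> 0" "c > 0" "(- A) *v v = c *\<^sub>R v"
    by (rule symmetric_matrix_pos_eigenvector)
  then show ?thesis
    using that[of v "- c"] by (simp add: matrix_vector_mult_uminus minus_equation_iff[of "A *v v"])
qed

lemma dim_span_ge_1:
  fixes S :: "(real^'n) set"
  assumes "v \<in> S" "v \<noteq> 0"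
  shows "dim (span S) \<ge> 1"
  using assms span_base[of v S] dim_eq_0[of "span S"] by fastforce

lemma nondegenerate_isotropic_signature:
  fixes g :: "real^('n::enum)^('n::enum)"
  assumes sym: "transpose g = g" and inv: "invertible g"
    and "x \<noteq> 0" and iso: "inner x (g *v x) = 0"
  shows "pos_index g \<ge> 1 \<and> neg_index g \<ge> 1"
proof -
  have "g *v x \<noteq> 0"
    using inv \<open>x \<noteq> 0\<close> by (simp add: invertible_matrix_vector_eq_0)
  then have "\<not> (\<forall>y. inner y (g *v y) \<ge> 0)" and "\<not> (\<forall>y. inner y ((- g) *v y) \<ge> 0)"
    using psd_quadratic_form_zero_imp_kernel[OF sym, of x]
      psd_quadratic_form_zero_imp_kernel[of "- g" x] sym iso
    by (auto simp: transpose_uminus matrix_vector_mult_uminus)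
  then obtain y\<^sub>1 y\<^sub>2 where "inner y\<^sub>1 (g *v y\<^sub>1) < 0" "inner y\<^sub>2 (g *v y\<^sub>2) > 0"
    by (auto simp: not_le matrix_vector_mult_uminus)
  then obtain v\<^sub>1 c\<^sub>1 v\<^sub>2 c\<^sub>2 where "v\<^sub>1 \<noteq> 0" "c\<^sub>1 < 0" "g *v v\<^sub>1 = c\<^sub>1 *\<^sub>R v\<^sub>1"
    and "v\<^sub>2 \<noteq> 0" "c\<^sub>2 > 0" "g *v v\<^sub>2 = c\<^sub>2 *\<^sub>R v\<^sub>2"
    by (metis symmetric_matrix_neg_eigenvector symmetric_matrix_pos_eigenvector sym)
  then show ?thesis
    unfolding pos_index_def neg_index_def by (blast intro: dim_span_ge_1)
qed

lemma num_idx: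
  assumes "k < CARD('n::enum)"
  shows "num (idx k :: 'n) = k"
  unfolding num_def idx_def
proof (rule the_equality)
  show "k < length (Enum.enum :: 'n list) \<and> (Enum.enum :: 'n list) ! k = Enum.enum ! k"
    using assms by (simp add: card_UNIV_length_enum)
next
  fix j
  assume "j < length (Enum.enum :: 'n list) \<and> (Enum.enum :: 'n list) ! j = Enum.enum ! k"
  then show "j = k"
    using assms nth_eq_iff_index_eq[OF enum_distinct] by (auto simp: card_UNIV_length_enum)
qed

lemma inner_axis_matrix_vector_axis:
  "inner (axis i 1) ((A::real^'n^'m) *v axis j 1) = A $ i $ j"
  by (simp add: inner_axis' matrix_vector_mult_basis column_def)

lemma from_kinetic_model_isotropic:
  assumes "from_kinetic_model U a b"
  obtains u y where "u \<in> U" "y \<noteq> 0" "inner y (a u *v y) = 0"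
proof -
  obtain V P JP clos where "V \<subseteq> U" "V \<noteq> {}" and cv: "change_of_vars V P JP"
    and km: "\<forall>u\<in>V. \<forall>i j.
            tr_alpha a JP u $ i $ j = of_nat (num i + num j) * KMP clos P (num i + num j - 1) u"
    using assms unfolding from_kinetic_model_def by blast
  then obtain u where "u \<in> U" "u \<in> V"
    by blast
  define i\<^sub>0 :: 'a where "i\<^sub>0 = idx 0"
  have "num i\<^sub>0 = 0"
    unfolding i\<^sub>0_def by (rule num_idx) simp
  then have "inner (axis i\<^sub>0 1) (tr_alpha a JP u *v axis i\<^sub>0 1) = 0"
    using km \<open>u \<in> V\<close> by (simp add: inner_axis_matrix_vector_axis)
  moreover have "invertible (JP u)"
    using cv \<open>u \<in> V\<close> unfolding change_of_vars_def by blast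
  ultimately obtain y where "y \<noteq> 0" "inner y (a u *v y) = 0"
    using isotropic_congruence_iff[of "JP u" "a u"]
    by (metis tr_alpha_def axis_eq_0_iff zero_neq_one)
  then show ?thesis
    using that \<open>u \<in> U\<close> by blast
qed

lemma flat_coordinates_isotropic:
  assumes "flat_coordinates U a b nu J g" "u \<in> U" "y \<noteq> 0" "inner y (a u *v y) = 0"
  obtains x where "x \<noteq> 0" "inner x (g *v x) = 0"
proof -
  have "invertible (J u)" "J u ** a u ** transpose (J u) = g"
    using assms(1,2) unfolding flat_coordinates_def change_of_vars_def tr_alpha_def by auto
  then show ?thesis
    using that isotropic_congruence_iff[of "J u" "a u"] assms(3,4) by auto
qed

theorem corollary2:
  fixes U :: "(real^('n::enum)) set"
    and a :: "real^('n::enum) \<Rightarrow> real^('n::enum)^('n::enum)"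
    and b :: "real^('n::enum) \<Rightarrow> real^('n::enum) \<Rightarrow> real^('n::enum)^('n::enum)"
    and l q :: nat
  assumes "hydro_bracket U a b"
    and "nondegenerate U a"
    and "poisson_DN U a b"
    and "from_kinetic_model U a b"
    and "bracket_signature U a b l q"
  shows "l \<ge> 1 \<and> q \<ge> 1"
proof -
  obtain nu J g where flat: "flat_coordinates U a b nu J g"
    and "pos_index g = l" "neg_index g = q"
    using assms(5) unfolding bracket_signature_def by blast
  obtain u y where "u \<in> U" "y \<noteq> 0" "inner y (a u *v y) = 0"
    using assms(4) by (rule from_kinetic_model_isotropic)
  with flat obtain x where "x \<noteq> 0" "inner x (g *v x) = 0"
    by (rule flat_coordinates_isotropic)
  moreover have "transpose g = g" "invertible g"
    using flat unfolding flat_coordinates_def by auto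
  ultimately show ?thesis
    using nondegenerate_isotropic_signature \<open>pos_index g = l\<close> \<open>neg_index g = q\<close> by blast
qed

end
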